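(* Let $G$ be a connected complex Lie group, $H$ a complex Lie group, $\Gamma \subset G$ a discrete subgroup and $\rho : \Gamma \to H$ a group homomorphism. Assume that every holomorphic function on $G/\Gamma$ is constant. Then the holomorphic $H$-principal bundle $E \to G/\Gamma$ induced by $\rho$ is holomorphically trivial if and only if $\rho$ extends to a holomorphic group homomorphism $\tilde\rho : G \to H$.
   Context: For a homomorphism $\rho:\Gamma\to H$, the induced (flat) $H$-principal bundle over $G/\Gamma$ is $E=(G\times H)/\Gamma$, where $\Gamma$ acts on $G$ by right multiplication (deck transformations) and on $H$ via $\rho$; $H$ acts on $E$ by right multiplication on the second factor. Such a bundle is holomorphically trivial as an $H$-principal bundle (not necessarily compatibly with the flat connection) if and only if there is a holomorphic map $\phi:G\to H$ with $\phi(g\gamma)=\phi(g)\rho(\gamma)$ for all $g\in G$, $\gamma\in\Gamma$. *)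

theory Defs
  imports "HOL-Analysis.Analysis"
begin

definition cscale :: "complex \<Rightarrow> complex^'n \<Rightarrow> complex^'n" where
  "cscale c v = (\<chi> i. c * v $ i)"

definition holo_on :: "(complex^'n \<Rightarrow> complex^'m) \<Rightarrow> (complex^'n) set \<Rightarrow> bool" where
  "holo_on f S \<longleftrightarrow> open S \<and>
     (\<forall>x\<in>S. \<exists>D. (f has_derivative D) (at x) \<and> (\<forall>c v. D (cscale c v) = cscale c (D v)))"

definition holo2_on :: "((complex^'n) \<times> (complex^'n) \<Rightarrow> complex^'m) \<Rightarrow> ((complex^'n) \<times> (complex^'n)) set \<Rightarrow> bool" where
  "holo2_on f S \<longleftrightarrow> open S \<and>
     (\<forall>x\<in>S. \<exists>D. (f has_derivative D) (at x) \<and>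
        (\<forall>c v w. D (cscale c v, cscale c w) = cscale c (D (v, w))))"

definition is_chart :: "('a::topological_space \<Rightarrow> complex^'n) \<Rightarrow> 'a set \<Rightarrow> bool" where
  "is_chart \<phi> U \<longleftrightarrow> open U \<and> open (\<phi> ` U) \<and> inj_on \<phi> U \<and> continuous_on U \<phi> \<and>
     continuous_on (\<phi> ` U) (inv_into U \<phi>)"

definition complex_atlas :: "(('a::topological_space \<Rightarrow> complex^'n) \<times> 'a set) set \<Rightarrow> bool" where
  "complex_atlas A \<longleftrightarrow>
     (\<forall>(\<phi>, U)\<in>A. is_chart \<phi> U) \<and> (\<Union>(\<phi>, U)\<in>A. U) = UNIV \<and>
     (\<forall>(\<phi>, U)\<in>A. \<forall>(\<psi>, V)\<in>A. holo_on (\<psi> \<circ> inv_into U \<phi>) (\<phi> ` (U \<inter> V)))"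

definition holo_map ::
  "(('a::topological_space \<Rightarrow> complex^'n) \<times> 'a set) set \<Rightarrow>
   (('b::topological_space \<Rightarrow> complex^'m) \<times> 'b set) set \<Rightarrow> ('a \<Rightarrow> 'b) \<Rightarrow> bool" where
  "holo_map A B f \<longleftrightarrow> continuous_on UNIV f \<and>
     (\<forall>(\<phi>, U)\<in>A. \<forall>(\<psi>, V)\<in>B. holo_on (\<psi> \<circ> f \<circ> inv_into U \<phi>) (\<phi> ` (U \<inter> f -` V)))"

definition holo_fun :: "(('a::topological_space \<Rightarrow> complex^'n) \<times> 'a set) set \<Rightarrow> ('a \<Rightarrow> complex) \<Rightarrow> bool" where
  "holo_fun A f \<longleftrightarrow> continuous_on UNIV f \<and>
     (\<forall>(\<phi>, U)\<in>A. holo_on (\<lambda>z. (\<chi> i::1. f (inv_into U \<phi> z))) (\<phi> ` U))"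

text \<open>Complex Lie group: a Hausdorff topological group (written additively, not
  necessarily commutative) with a holomorphic atlas for which multiplication and
  inversion are holomorphic.\<close>
definition complex_lie_group :: "(('a::{t2_space, group_add} \<Rightarrow> complex^'n) \<times> 'a set) set \<Rightarrow> bool" where
  "complex_lie_group A \<longleftrightarrow> complex_atlas A \<and>
     continuous_on UNIV (\<lambda>p::'a \<times> 'a. fst p + snd p) \<and>
     (\<forall>(\<phi>, U)\<in>A. \<forall>(\<phi>', U')\<in>A. \<forall>(\<psi>, V)\<in>A.
        holo2_on (\<lambda>(z, w). \<psi> (inv_into U \<phi> z + inv_into U' \<phi>' w))
          {(z, w). z \<in> \<phi> ` U \<and> w \<in> \<phi>' ` U' \<and> inv_into U \<phi> z + inv_into U' \<phi>' w \<in> V}) \<and>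
     holo_map A A (uminus :: 'a \<Rightarrow> 'a)"

definition discrete_subgroup :: "'a::{topological_space, group_add} set \<Rightarrow> bool" where
  "discrete_subgroup \<Gamma> \<longleftrightarrow> 0 \<in> \<Gamma> \<and> (\<forall>a\<in>\<Gamma>. \<forall>b\<in>\<Gamma>. a + b \<in> \<Gamma>) \<and> (\<forall>a\<in>\<Gamma>. - a \<in> \<Gamma>) \<and>
     (\<forall>\<gamma>\<in>\<Gamma>. \<exists>U. open U \<and> U \<inter> \<Gamma> = {\<gamma>})"

definition group_hom_on :: "'a::group_add set \<Rightarrow> ('a \<Rightarrow> 'b::group_add) \<Rightarrow> bool" where
  "group_hom_on \<Gamma> \<rho> \<longleftrightarrow> (\<forall>a\<in>\<Gamma>. \<forall>b\<in>\<Gamma>. \<rho> (a + b) = \<rho> a + \<rho> b)"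

text \<open>Holomorphic triviality of the induced bundle (G x H)/Gamma, via the criterion
  given in the context: a holomorphic phi : G -> H with phi(g gamma) = phi(g) rho(gamma).\<close>
definition induced_bundle_holo_trivial ::
  "(('g::{t2_space, group_add} \<Rightarrow> complex^'n) \<times> 'g set) set \<Rightarrow>
   (('h::{t2_space, group_add} \<Rightarrow> complex^'m) \<times> 'h set) set \<Rightarrow> 'g set \<Rightarrow> ('g \<Rightarrow> 'h) \<Rightarrow> bool" where
  "induced_bundle_holo_trivial A B \<Gamma> \<rho> \<longleftrightarrow>
     (\<exists>\<phi>. holo_map A B \<phi> \<and> (\<forall>g. \<forall>\<gamma>\<in>\<Gamma>. \<phi> (g + \<gamma>) = \<phi> g + \<rho> \<gamma>))"

text \<open>Holomorphic functions on G/Gamma = Gamma-invariant holomorphic functions on G.\<close>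
definition holo_fun_quotient :: "(('a::{t2_space, group_add} \<Rightarrow> complex^'n) \<times> 'a set) set \<Rightarrow> 'a set \<Rightarrow> ('a \<Rightarrow> complex) \<Rightarrow> bool" where
  "holo_fun_quotient A \<Gamma> f \<longleftrightarrow> holo_fun A f \<and> (\<forall>g. \<forall>\<gamma>\<in>\<Gamma>. f (g + \<gamma>) = f g)"

end

(*
  Write the groups additively, as in the definitions. A trivialisation of the induced bundle is a
  holomorphic phi : G -> H with phi (g + gamma) = phi g + rho gamma, so for fixed x the map
  g |-> phi (x + g) - phi g is Gamma-invariant. It is H-valued, but along a holomorphic curve
  x = c s through 0 it starts at 0 for every g, and its derivative at s = 0 in a chart of H at 0
  is a complex-valued holomorphic function of g (Cauchy's integral formula for the derivative,
  differentiated under the integral sign). Being Gamma-invariant it is constant, so the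
  differences phi (x + g) - phi g and phi x - phi 0 solve the same first-order equation in x;
  hence they agree near 0, and on all of G by connectedness. Then x |-> - phi 0 + phi x is a
  holomorphic homomorphism extending rho. Conversely an extension is itself a trivialisation.
*)

theory Submission
  imports Defs "HOL-Complex_Analysis.Cauchy_Integral_Formula"
begin

(* Otherwise every vector component x $ i is ambiguous with a power series coefficient. *)
no_notation fps_nth (infixl \<open>$\<close> 75)

section \<open>Holomorphy at a point\<close>

lemma cscale_component [simp]: "cscale c v $ i = c * v $ i"
  by (simp add: cscale_def)

lemma cscale_one [simp]: "cscale 1 v = v"
  by (simp add: vec_eq_iff)

lemma cscale_zero_left [simp]: "cscale 0 v = 0"
  by (simp add: vec_eq_iff)

lemma cscale_zero_right [simp]: "cscale c 0 = 0"
  by (simp add: vec_eq_iff)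

lemma cscale_mult: "cscale (a * b) v = cscale a (cscale b v)"
  by (simp add: vec_eq_iff)

lemma bounded_linear_cscale_left: "bounded_linear (\<lambda>c. cscale c v)"
proof -
  have "linear (\<lambda>c. cscale c v)"
    by (rule linearI) (simp_all add: vec_eq_iff algebra_simps vector_scaleR_component)
  then show ?thesis
    by (simp add: linear_conv_bounded_linear)
qed

lemma norm_cscale: "norm (cscale c v) = norm c * norm v"
proof -
  have "norm (cscale c v) = L2_set (\<lambda>i. norm c * norm (v $ i)) UNIV"
    by (simp add: norm_vec_def norm_mult)
  also have "\<dots> = norm c * norm v"
    by (simp add: L2_set_right_distrib norm_vec_def)
  finally show ?thesis .
qed

definition pair_cscale ::
  "complex \<Rightarrow> (complex^'n) \<times> (complex^'m) \<Rightarrow> (complex^'n) \<times> (complex^'m)" where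
  "pair_cscale c p = (cscale c (fst p), cscale c (snd p))"

lemma pair_cscale_Pair [simp]: "pair_cscale c (v, w) = (cscale c v, cscale c w)"
  by (simp add: pair_cscale_def)

lemma pair_cscale_zero_left [simp]: "pair_cscale 0 p = 0"
  by (simp add: pair_cscale_def zero_prod_def)

lemma bounded_linear_pair_cscale_left: "bounded_linear (\<lambda>c. pair_cscale c p)"
  unfolding pair_cscale_def by (intro bounded_linear_Pair bounded_linear_cscale_left)

lemma norm_pair_cscale: "norm (pair_cscale c p) = norm c * norm p"
proof -
  have "norm (pair_cscale c p) = sqrt ((norm c)\<^sup>2 * ((norm (fst p))\<^sup>2 + (norm (snd p))\<^sup>2))"
    by (simp add: pair_cscale_def norm_Pair norm_cscale power_mult_distrib algebra_simps)
  also have "\<dots> = norm c * norm p"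
    by (simp add: real_sqrt_mult norm_prod_def)
  finally show ?thesis .
qed

text \<open>A single notion of holomorphy at a point for all the spaces involved: \<open>sA\<close> and \<open>sB\<close>
  are the complex scalar multiplications of domain and codomain (\<open>(*)\<close> on \<open>\<complex>\<close>,
  \<open>cscale\<close> on \<open>\<complex>\<^sup>n\<close>, \<open>pair_cscale\<close> on \<open>\<complex>\<^sup>n \<times> \<complex>\<^sup>m\<close>).\<close>
definition holo_at :: "(complex \<Rightarrow> 'a \<Rightarrow> 'a) \<Rightarrow> (complex \<Rightarrow> 'b \<Rightarrow> 'b) \<Rightarrow>
    ('a::real_normed_vector \<Rightarrow> 'b::real_normed_vector) \<Rightarrow> 'a \<Rightarrow> bool" where
  "holo_at sA sB f x \<longleftrightarrow> (\<exists>D. (f has_derivative D) (at x) \<and> (\<forall>c v. D (sA c v) = sB c (D v)))"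

lemma holo_atE:
  assumes "holo_at sA sB f x"
  obtains D where "(f has_derivative D) (at x)" "\<And>c v. D (sA c v) = sB c (D v)"
  using assms unfolding holo_at_def by blast

lemma holo_atI:
  "(f has_derivative D) (at x) \<Longrightarrow> (\<And>c v. D (sA c v) = sB c (D v)) \<Longrightarrow> holo_at sA sB f x"
  unfolding holo_at_def by blast

lemma holo_on_iff_holo_at: "holo_on f S \<longleftrightarrow> open S \<and> (\<forall>x\<in>S. holo_at cscale cscale f x)"
  by (simp add: holo_on_def holo_at_def)

lemma holo2_on_iff_holo_at: "holo2_on f S \<longleftrightarrow> open S \<and> (\<forall>x\<in>S. holo_at pair_cscale cscale f x)"
  by (simp add: holo2_on_def holo_at_def pair_cscale_def)

lemma holo_at_frechet_derivative:
  assumes "holo_at sA sB f x"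
  shows "(f has_derivative frechet_derivative f (at x)) (at x)"
    and "frechet_derivative f (at x) (sA c v) = sB c (frechet_derivative f (at x) v)"
  using assms by (auto elim!: holo_atE dest: frechet_derivative_at[symmetric])

lemma holo_at_isCont: "holo_at sA sB f x \<Longrightarrow> isCont f x"
  by (auto elim: holo_atE intro: has_derivative_continuous)

lemma holo_at_compose:
  assumes "holo_at sB sC g (f x)" and "holo_at sA sB f x"
  shows "holo_at sA sC (\<lambda>y. g (f y)) x"
proof -
  obtain Dg where "(g has_derivative Dg) (at (f x))" "\<And>c v. Dg (sB c v) = sC c (Dg v)"
    using assms(1) by (elim holo_atE) (rule that)
  moreover obtain Df where "(f has_derivative Df) (at x)" "\<And>c v. Df (sA c v) = sB c (Df v)"
    using assms(2) by (elim holo_atE) (rule that)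
  ultimately show ?thesis
    by (intro holo_atI[of _ "\<lambda>v. Dg (Df v)"]) (auto dest: diff_chain_at simp: o_def)
qed

lemma holo_at_transform_within_open:
  assumes "holo_at sA sB f x" "open T" "x \<in> T" "\<And>y. y \<in> T \<Longrightarrow> f y = g y"
  shows "holo_at sA sB g x"
  using assms has_derivative_transform_within_open unfolding holo_at_def by metis

lemma holo_at_const: "holo_at sA cscale (\<lambda>_. c) x"
  by (rule holo_atI[of _ "\<lambda>_. 0"]) auto

lemma holo_at_ident: "holo_at s s (\<lambda>y. y) x"
  by (rule holo_atI[of _ "\<lambda>v. v"]) (auto intro: has_derivative_ident)

lemma holo_at_Pair:
  assumes "holo_at sA cscale f x" "holo_at sA cscale g x"
  shows "holo_at sA pair_cscale (\<lambda>y. (f y, g y)) x"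
proof -
  obtain Df where "(f has_derivative Df) (at x)" "\<And>c v. Df (sA c v) = cscale c (Df v)"
    using assms(1) by (elim holo_atE) (rule that)
  moreover obtain Dg where "(g has_derivative Dg) (at x)" "\<And>c v. Dg (sA c v) = cscale c (Dg v)"
    using assms(2) by (elim holo_atE) (rule that)
  ultimately show ?thesis
    by (intro holo_atI[of _ "\<lambda>v. (Df v, Dg v)"]) (auto intro: has_derivative_Pair)
qed

lemma holo_at_fst: "holo_at pair_cscale cscale fst p"
  by (rule holo_atI[of _ fst]) (auto intro: has_derivative_fst[OF has_derivative_ident])

lemma holo_at_snd: "holo_at pair_cscale cscale snd p"
  by (rule holo_atI[of _ snd]) (auto intro: has_derivative_snd[OF has_derivative_ident])

lemma holo_at_complex_line: "holo_at (*) cscale (\<lambda>s. a + cscale s w) s0"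
proof (rule holo_atI)
  show "((\<lambda>s. a + cscale s w) has_derivative (\<lambda>s. cscale s w)) (at s0)"
    using has_derivative_add[OF has_derivative_const
        bounded_linear_imp_has_derivative[OF bounded_linear_cscale_left]] by simp
qed (simp add: cscale_mult)

lemma holo_at_vec_nth: "holo_at sA cscale f x \<Longrightarrow> holo_at sA (*) (\<lambda>y. f y $ j) x"
  by (erule holo_atE, rule holo_atI[of _ "\<lambda>v. _ v $ j"])
     (auto dest: diff_chain_at[OF _ bounded_linear_imp_has_derivative[OF bounded_linear_vec_nth]]
       simp: o_def)

lemma holo_at_vec1: "holo_at sA (*) f x \<Longrightarrow> holo_at sA cscale (\<lambda>y. \<chi> i::1. f y) x"
proof (erule holo_atE)
  fix D assume D: "(f has_derivative D) (at x)" "\<And>c v. D (sA c v) = c * D v"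
  have "bounded_linear (\<lambda>a::complex. \<chi> i::1. a)"
    by (simp add: linear_conv_bounded_linear[symmetric] linearI vec_eq_iff)
  from diff_chain_at[OF D(1) bounded_linear_imp_has_derivative[OF this]] D(2)
  show ?thesis
    by (intro holo_atI[of _ "\<lambda>v. \<chi> i::1. D v"]) (auto simp: o_def vec_eq_iff)
qed

lemma holo_at_complex_curve_has_derivative:
  assumes "holo_at (*) cscale F s0"
  shows "(F has_derivative (\<lambda>h. cscale h (\<chi> j. deriv (\<lambda>s. F s $ j) s0))) (at s0)"
proof -
  obtain D where D: "(F has_derivative D) (at s0)" "\<And>c v. D (c * v) = cscale c (D v)"
    using assms by (elim holo_atE) (rule that)
  have D_eq: "D h = cscale h (D 1)" for h
    using D(2)[of h 1] by simp
  have "((\<lambda>s. F s $ j) has_derivative (\<lambda>h. D h $ j)) (at s0)" for j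
    using diff_chain_at[OF D(1) bounded_linear_imp_has_derivative[OF bounded_linear_vec_nth]]
    by (simp add: o_def)
  moreover have "(\<lambda>h. D h $ j) = (\<lambda>h. D 1 $ j * h)" for j
    by (subst D_eq) (simp add: fun_eq_iff mult.commute)
  ultimately have "((\<lambda>s. F s $ j) has_field_derivative D 1 $ j) (at s0)" for j
    by (simp add: has_field_derivative_def)
  then have "(\<chi> j. deriv (\<lambda>s. F s $ j) s0) = D 1"
    by (simp add: DERIV_imp_deriv vec_eq_iff)
  then have "D = (\<lambda>h. cscale h (\<chi> j. deriv (\<lambda>s. F s $ j) s0))"
    by (simp only:) (rule ext, rule D_eq)
  with D(1) show ?thesis
    by simp
qed

section \<open>Holomorphic maps into complex manifolds\<close>

lemma is_chartD:
  assumes "is_chart \<kappa> U"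
  shows "open U" "open (\<kappa> ` U)" "inj_on \<kappa> U" "continuous_on U \<kappa>"
    and "continuous_on (\<kappa> ` U) (inv_into U \<kappa>)"
  using assms by (auto simp: is_chart_def)

lemma chart_inv_into_chart: "is_chart \<kappa> U \<Longrightarrow> x \<in> U \<Longrightarrow> inv_into U \<kappa> (\<kappa> x) = x"
  by (simp add: is_chartD(3) inv_into_f_f)

lemma chart_image_open:
  assumes "is_chart \<kappa> U" "open W" "W \<subseteq> U"
  shows "open (\<kappa> ` W)"
proof -
  have "\<kappa> ` W = inv_into U \<kappa> -` W \<inter> \<kappa> ` U"
    using assms by (force simp: chart_inv_into_chart)
  then show ?thesis
    using is_chartD[OF assms(1)] assms(2) continuous_on_open_vimage by metis
qed

lemma atlas_chart: "complex_atlas A \<Longrightarrow> (\<kappa>, U) \<in> A \<Longrightarrow> is_chart \<kappa> U"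
  by (auto simp: complex_atlas_def)

lemma atlas_cover:
  assumes "complex_atlas A"
  obtains \<kappa> U where "(\<kappa>, U) \<in> A" "x \<in> U"
  using assms unfolding complex_atlas_def by blast

lemma atlas_transition: "complex_atlas A \<Longrightarrow> (\<phi>, U) \<in> A \<Longrightarrow> (\<psi>, V) \<in> A \<Longrightarrow>
   holo_on (\<psi> \<circ> inv_into U \<phi>) (\<phi> ` (U \<inter> V))"
  by (auto simp: complex_atlas_def)

lemma isCont_eventually_in_open:
  assumes "isCont F y" "open S" "F y \<in> S"
  obtains T where "open T" "y \<in> T" "\<And>z. z \<in> T \<Longrightarrow> F z \<in> S"
  using assms continuous_at_open by metis

definition holo_map_at :: "(complex \<Rightarrow> 'e \<Rightarrow> 'e) \<Rightarrow> (('a::topological_space \<Rightarrow> complex^'n) \<times> 'a set) set \<Rightarrow>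
    ('e::real_normed_vector \<Rightarrow> 'a) \<Rightarrow> 'e \<Rightarrow> bool" where
  "holo_map_at sE A F y \<longleftrightarrow>
     isCont F y \<and> (\<forall>(\<psi>, V)\<in>A. F y \<in> V \<longrightarrow> holo_at sE cscale (\<lambda>z. \<psi> (F z)) y)"

lemma holo_map_at_chart:
  "holo_map_at sE A F y \<Longrightarrow> (\<psi>, V) \<in> A \<Longrightarrow> F y \<in> V \<Longrightarrow> holo_at sE cscale (\<lambda>z. \<psi> (F z)) y"
  by (auto simp: holo_map_at_def)

lemma holo_map_at_isCont: "holo_map_at sE A F y \<Longrightarrow> isCont F y"
  by (simp add: holo_map_at_def)

text \<open>One chart suffices, by holomorphy of the transition maps.\<close>
lemma holo_map_atI:
  assumes A: "complex_atlas A" and "isCont F y" and \<psi>: "(\<psi>, V) \<in> A" "F y \<in> V"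
    and "holo_at sE cscale (\<lambda>z. \<psi> (F z)) y"
  shows "holo_map_at sE A F y"
  unfolding holo_map_at_def
proof (intro conjI \<open>isCont F y\<close> ballI impI, clarify)
  fix \<psi>' V' assume \<psi>': "(\<psi>', V') \<in> A" "F y \<in> V'"
  have V: "is_chart \<psi> V" and V': "is_chart \<psi>' V'"
    using A \<psi> \<psi>' atlas_chart by blast+
  have "holo_at cscale cscale (\<psi>' \<circ> inv_into V \<psi>) (\<psi> (F y))"
    using atlas_transition[OF A \<psi>(1) \<psi>'(1)] \<psi> \<psi>' by (auto simp: holo_on_iff_holo_at)
  from holo_at_compose[OF this assms(5)]
  have "holo_at sE cscale (\<lambda>z. (\<psi>' \<circ> inv_into V \<psi>) (\<psi> (F z))) y" .
  moreover obtain T where "open T" "y \<in> T" "\<And>z. z \<in> T \<Longrightarrow> F z \<in> V"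
    using isCont_eventually_in_open[OF \<open>isCont F y\<close> is_chartD(1)[OF V] \<psi>(2)] by blast
  ultimately show "holo_at sE cscale (\<lambda>z. \<psi>' (F z)) y"
    by (elim holo_at_transform_within_open) (auto simp: chart_inv_into_chart[OF V])
qed

lemma holo_map_at_const: "holo_map_at sE A (\<lambda>_. c) y"
  by (simp add: holo_map_at_def holo_at_const)

lemma holo_map_at_compose_holo_at:
  assumes "holo_map_at sE A F (e x)" and "holo_at sX sE e x"
  shows "holo_map_at sX A (\<lambda>z. F (e z)) x"
  using assms continuous_at_compose[OF holo_at_isCont[OF assms(2)] holo_map_at_isCont[OF assms(1)]]
  by (auto simp: holo_map_at_def o_def intro: holo_at_compose)

lemma holo_map_at_compose:
  fixes F :: "'e::real_normed_vector \<Rightarrow> 'a::t2_space" and f :: "'a \<Rightarrow> 'b::t2_space"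
  assumes A: "complex_atlas A" and B: "complex_atlas B"
    and f: "holo_map A B f" and F: "holo_map_at sE A F y"
  shows "holo_map_at sE B (\<lambda>z. f (F z)) y"
proof -
  obtain \<kappa> U where \<kappa>: "(\<kappa>, U) \<in> A" "F y \<in> U" using A by (rule atlas_cover)
  obtain \<psi> V where \<psi>: "(\<psi>, V) \<in> B" "f (F y) \<in> V" using B by (rule atlas_cover)
  have U: "is_chart \<kappa> U" using A \<kappa> atlas_chart by blast
  have "isCont f (F y)"
    using f continuous_on_eq_continuous_at open_UNIV by (auto simp: holo_map_def)
  then have cont: "isCont (\<lambda>z. f (F z)) y"
    using continuous_at_compose[OF holo_map_at_isCont[OF F]] by (simp add: o_def)
  have "holo_on (\<psi> \<circ> f \<circ> inv_into U \<kappa>) (\<kappa> ` (U \<inter> f -` V))"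
    using f \<kappa> \<psi> by (auto simp: holo_map_def)
  then have "holo_at cscale cscale (\<psi> \<circ> f \<circ> inv_into U \<kappa>) (\<kappa> (F y))"
    using \<kappa> \<psi> by (auto simp: holo_on_iff_holo_at)
  from holo_at_compose[OF this holo_map_at_chart[OF F \<kappa>]]
  have "holo_at sE cscale (\<lambda>z. (\<psi> \<circ> f \<circ> inv_into U \<kappa>) (\<kappa> (F z))) y" .
  moreover obtain T where "open T" "y \<in> T" "\<And>z. z \<in> T \<Longrightarrow> F z \<in> U"
    using isCont_eventually_in_open[OF holo_map_at_isCont[OF F] is_chartD(1)[OF U] \<kappa>(2)] by blast
  ultimately have "holo_at sE cscale (\<lambda>z. \<psi> (f (F z))) y"
    by (elim holo_at_transform_within_open) (auto simp: chart_inv_into_chart[OF U])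
  then show ?thesis
    by (rule holo_map_atI[OF B cont \<psi>])
qed

lemma holo_map_at_inv_chart:
  assumes A: "complex_atlas A" and \<kappa>: "(\<kappa>, U) \<in> A" and z: "z \<in> \<kappa> ` U"
  shows "holo_map_at cscale A (inv_into U \<kappa>) z"
proof -
  have U: "is_chart \<kappa> U" using A \<kappa> atlas_chart by blast
  have "isCont (inv_into U \<kappa>) z"
    using is_chartD(2,5)[OF U] z continuous_on_eq_continuous_at by blast
  moreover have "holo_at cscale cscale (\<lambda>w. \<kappa> (inv_into U \<kappa> w)) z"
    by (rule holo_at_transform_within_open[OF holo_at_ident is_chartD(2)[OF U] z])
       (auto simp: f_inv_into_f)
  moreover have "inv_into U \<kappa> z \<in> U" using z by (auto intro: inv_into_into)
  ultimately show ?thesis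
    using holo_map_atI[OF A _ \<kappa>] by blast
qed

lemma holo_map_at_in_chart:
  fixes f :: "'a::t2_space \<Rightarrow> 'b::t2_space"
  assumes "complex_atlas A" "complex_atlas B" "holo_map A B f" "(\<kappa>, U) \<in> A" "z \<in> \<kappa> ` U"
  shows "holo_map_at cscale B (\<lambda>w. f (inv_into U \<kappa> w)) z"
  using holo_map_at_compose[OF assms(1-3) holo_map_at_inv_chart[OF assms(1,4,5)]] .

lemma continuous_on_UNIV_by_charts:
  fixes f :: "'a::t2_space \<Rightarrow> 'b::topological_space"
  assumes A: "complex_atlas A"
    and cont: "\<And>\<kappa> U z. (\<kappa>, U) \<in> A \<Longrightarrow> z \<in> \<kappa> ` U \<Longrightarrow> isCont (\<lambda>w. f (inv_into U \<kappa> w)) z"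
  shows "continuous_on UNIV f"
proof (intro continuous_at_imp_continuous_on ballI)
  fix g
  obtain \<kappa> U where \<kappa>: "(\<kappa>, U) \<in> A" "g \<in> U" using A by (rule atlas_cover)
  have U: "is_chart \<kappa> U" using atlas_chart[OF A \<kappa>(1)] .
  have "isCont \<kappa> g"
    using is_chartD(1,4)[OF U] \<kappa>(2) continuous_on_eq_continuous_at by blast
  moreover have "isCont (\<lambda>w. f (inv_into U \<kappa> w)) (\<kappa> g)"
    using cont \<kappa> by blast
  ultimately have c: "isCont (\<lambda>x. f (inv_into U \<kappa> (\<kappa> x))) g"
    by (rule isCont_o2)
  have ev: "\<forall>\<^sub>F x in nhds g. f (inv_into U \<kappa> (\<kappa> x)) = f x"
    using is_chartD(1)[OF U] \<kappa>(2)
    by (auto simp: eventually_nhds chart_inv_into_chart[OF U] intro!: exI[of _ U])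
  show "isCont f g"
    using isCont_cong[OF ev, THEN iffD1, OF c] .
qed

lemma holo_mapI:
  fixes f :: "'a::t2_space \<Rightarrow> 'b::t2_space"
  assumes A: "complex_atlas A" and B: "complex_atlas B"
    and f: "\<And>\<kappa> U z. (\<kappa>, U) \<in> A \<Longrightarrow> z \<in> \<kappa> ` U \<Longrightarrow> holo_map_at cscale B (\<lambda>w. f (inv_into U \<kappa> w)) z"
  shows "holo_map A B f"
proof -
  have cont: "continuous_on UNIV f"
    using continuous_on_UNIV_by_charts[OF A holo_map_at_isCont[OF f]] .
  show ?thesis
    unfolding holo_map_def
  proof (intro conjI cont ballI, clarify)
    fix \<kappa> U \<psi> V assume \<kappa>: "(\<kappa>, U) \<in> A" and \<psi>: "(\<psi>, V) \<in> B"
    have U: "is_chart \<kappa> U" and V: "is_chart \<psi> V"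
      using A B \<kappa> \<psi> atlas_chart by blast+
    have "open (U \<inter> f -` V)"
      using cont is_chartD(1)[OF U] is_chartD(1)[OF V] open_vimage by blast
    then have "open (\<kappa> ` (U \<inter> f -` V))"
      using chart_image_open[OF U] by blast
    moreover have "holo_at cscale cscale (\<lambda>w. \<psi> (f (inv_into U \<kappa> w))) z"
      if "z \<in> \<kappa> ` (U \<inter> f -` V)" for z
      using that holo_map_at_chart[OF f[OF \<kappa>] \<psi>] by (auto simp: chart_inv_into_chart[OF U])
    ultimately show "holo_on (\<psi> \<circ> f \<circ> inv_into U \<kappa>) (\<kappa> ` (U \<inter> f -` V))"
      by (simp add: holo_on_iff_holo_at o_def)
  qed
qed

lemma holo_funI:
  fixes f :: "'a::t2_space \<Rightarrow> complex"
  assumes A: "complex_atlas A"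
    and f: "\<And>\<kappa> U z. (\<kappa>, U) \<in> A \<Longrightarrow> z \<in> \<kappa> ` U \<Longrightarrow> holo_at cscale (*) (\<lambda>w. f (inv_into U \<kappa> w)) z"
  shows "holo_fun A f"
proof -
  have cont: "continuous_on UNIV f"
    using continuous_on_UNIV_by_charts[OF A holo_at_isCont[OF f]] .
  show ?thesis
    unfolding holo_fun_def
  proof (intro conjI cont ballI, clarify)
    fix \<kappa> U assume \<kappa>: "(\<kappa>, U) \<in> A"
    show "holo_on (\<lambda>z. \<chi> i::1. f (inv_into U \<kappa> z)) (\<kappa> ` U)"
      using is_chartD(2)[OF atlas_chart[OF A \<kappa>]] holo_at_vec1[OF f[OF \<kappa>]]
      by (simp add: holo_on_iff_holo_at)
  qed
qed

lemma holo_map_compose: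
  fixes f :: "'a::t2_space \<Rightarrow> 'b::t2_space" and g :: "'b \<Rightarrow> 'c::t2_space"
  assumes "complex_atlas A" "complex_atlas B" "complex_atlas C"
    and "holo_map A B f" "holo_map B C g"
  shows "holo_map A C (\<lambda>x. g (f x))"
  using holo_map_at_compose[OF assms(2,3,5) holo_map_at_in_chart[OF assms(1,2,4)]]
  by (rule holo_mapI[OF assms(1,3)])

lemma has_derivative_zero_compose_holo_map:
  fixes F :: "'e::real_normed_vector \<Rightarrow> 'a::t2_space" and \<Phi> :: "'a \<Rightarrow> 'b::t2_space"
  assumes A: "complex_atlas A" and \<Phi>: "holo_map A B \<Phi>"
    and \<sigma>: "(\<sigma>, V) \<in> A" "F s0 \<in> V" and \<tau>: "(\<tau>, W) \<in> B" "\<Phi> (F s0) \<in> W"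
    and F: "isCont F s0" "((\<lambda>s. \<sigma> (F s)) has_derivative (\<lambda>_. 0)) (at s0)"
  shows "((\<lambda>s. \<tau> (\<Phi> (F s))) has_derivative (\<lambda>_. 0)) (at s0)"
proof -
  have V: "is_chart \<sigma> V" using A \<sigma>(1) by (rule atlas_chart)
  have "holo_on (\<tau> \<circ> \<Phi> \<circ> inv_into V \<sigma>) (\<sigma> ` (V \<inter> \<Phi> -` W))"
    using \<Phi> \<sigma> \<tau> by (auto simp: holo_map_def)
  then have "holo_at cscale cscale (\<tau> \<circ> \<Phi> \<circ> inv_into V \<sigma>) (\<sigma> (F s0))"
    using \<sigma>(2) \<tau>(2) unfolding holo_on_iff_holo_at by blast
  then obtain D where D: "((\<tau> \<circ> \<Phi> \<circ> inv_into V \<sigma>) has_derivative D) (at (\<sigma> (F s0)))"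
    by (elim holo_atE)
  have "D 0 = 0"
    using D has_derivative_bounded_linear linear_simps(3) by blast
  with diff_chain_at[OF F(2) D]
  have *: "((\<lambda>s. (\<tau> \<circ> \<Phi> \<circ> inv_into V \<sigma>) (\<sigma> (F s))) has_derivative (\<lambda>_. 0)) (at s0)"
    by (simp add: o_def)
  obtain T where T: "open T" "s0 \<in> T" "\<And>s. s \<in> T \<Longrightarrow> F s \<in> V"
    using isCont_eventually_in_open[OF F(1) is_chartD(1)[OF V] \<sigma>(2)] by blast
  show ?thesis
    by (rule has_derivative_transform_within_open[OF * T(1,2)]) (simp add: T(3) chart_inv_into_chart[OF V])
qed

lemma open_level_set_chart_has_derivative_zero:
  fixes F :: "'a::real_normed_vector \<Rightarrow> 'b::topological_space"
  assumes S: "open S" and F: "continuous_on S F" and \<sigma>: "is_chart \<sigma> V" "e \<in> V"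
    and zero: "\<And>y. y \<in> S \<Longrightarrow> F y \<in> V \<Longrightarrow> ((\<lambda>y. \<sigma> (F y)) has_derivative (\<lambda>_. 0)) (at y)"
  shows "open {y \<in> S. F y = e}"
  unfolding open_contains_ball
proof
  fix y1 assume y1: "y1 \<in> {y \<in> S. F y = e}"
  have "open (S \<inter> F -` V)"
    using continuous_open_preimage[OF F S is_chartD(1)[OF \<sigma>(1)]] .
  moreover have "y1 \<in> S \<inter> F -` V"
    using y1 \<sigma>(2) by simp
  ultimately obtain r where r: "r > 0" "ball y1 r \<subseteq> S \<inter> F -` V"
    by (rule openE)
  have "\<exists>c. \<forall>y\<in>ball y1 r. \<sigma> (F y) = c"
  proof (rule has_derivative_zero_constant[OF convex_ball])
    fix y assume "y \<in> ball y1 r"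
    then have "y \<in> S" "F y \<in> V" using r(2) by auto
    then show "((\<lambda>y. \<sigma> (F y)) has_derivative (\<lambda>_. 0)) (at y within ball y1 r)"
      by (rule has_derivative_at_withinI[OF zero])
  qed
  then have "\<sigma> (F y) = \<sigma> (F y1)" if "y \<in> ball y1 r" for y
    using that r(1) by (metis centre_in_ball)
  then have "ball y1 r \<subseteq> {y \<in> S. F y = e}"
    using r(2) y1 \<sigma>(2) inj_onD[OF is_chartD(3)[OF \<sigma>(1)]] by fastforce
  then show "\<exists>r>0. ball y1 r \<subseteq> {y \<in> S. F y = e}"
    using r(1) by blast
qed

lemma has_derivative_zero_in_chart_imp_constant:
  fixes F :: "'a::real_normed_vector \<Rightarrow> 'b::t2_space"
  assumes S: "connected S" "open S" and F: "continuous_on S F" and \<sigma>: "is_chart \<sigma> V" "e \<in> V"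
    and zero: "\<And>y. y \<in> S \<Longrightarrow> F y \<in> V \<Longrightarrow> ((\<lambda>y. \<sigma> (F y)) has_derivative (\<lambda>_. 0)) (at y)"
    and y0: "y0 \<in> S" "F y0 = e" and y: "y \<in> S"
  shows "F y = e"
proof -
  have "openin (top_of_set S) {y \<in> S. F y = e}"
    using open_level_set_chart_has_derivative_zero[OF S(2) F \<sigma> zero] by (intro open_subset) auto
  moreover have "closedin (top_of_set S) {y \<in> S. F y = e}"
    using continuous_closedin_preimage[OF F closed_singleton] by (simp add: vimage_def Int_def)
  ultimately have "{y \<in> S. F y = e} = S"
    using S(1) y0 unfolding connected_clopen by blast
  then show ?thesis
    using y by blast
qed

section \<open>Complex Lie groups\<close>

lemma lie_group_atlas: "complex_lie_group A \<Longrightarrow> complex_atlas A"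
  by (simp add: complex_lie_group_def)

lemma lie_group_holo_map_uminus: "complex_lie_group A \<Longrightarrow> holo_map A A uminus"
  by (simp add: complex_lie_group_def)

lemma lie_group_continuous_add:
  "complex_lie_group (A :: (('a::{t2_space, group_add} \<Rightarrow> complex^'n) \<times> 'a set) set) \<Longrightarrow>
    continuous_on UNIV (\<lambda>p::'a \<times> 'a. fst p + snd p)"
  by (simp add: complex_lie_group_def)

lemma lie_group_holo2_add:
  assumes "complex_lie_group A" "(\<phi>, U) \<in> A" "(\<phi>', U') \<in> A" "(\<psi>, V) \<in> A"
  shows "holo2_on (\<lambda>(z, w). \<psi> (inv_into U \<phi> z + inv_into U' \<phi>' w))
          {(z, w). z \<in> \<phi> ` U \<and> w \<in> \<phi>' ` U' \<and> inv_into U \<phi> z + inv_into U' \<phi>' w \<in> V}"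
proof -
  have "\<forall>(\<phi>, U)\<in>A. \<forall>(\<phi>', U')\<in>A. \<forall>(\<psi>, V)\<in>A.
        holo2_on (\<lambda>(z, w). \<psi> (inv_into U \<phi> z + inv_into U' \<phi>' w))
          {(z, w). z \<in> \<phi> ` U \<and> w \<in> \<phi>' ` U' \<and> inv_into U \<phi> z + inv_into U' \<phi>' w \<in> V}"
    using assms(1) by (simp add: complex_lie_group_def)
  then show ?thesis
    using assms(2-4) by (simp add: Ball_def)
qed

lemma holo_map_at_add:
  assumes G: "complex_lie_group A" and F: "holo_map_at sE A F y" and F': "holo_map_at sE A F' y"
  shows "holo_map_at sE A (\<lambda>z. F z + F' z) y"
proof -
  have A: "complex_atlas A" using G by (rule lie_group_atlas)
  obtain \<kappa> U where \<kappa>: "(\<kappa>, U) \<in> A" "F y \<in> U" using A by (rule atlas_cover)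
  obtain \<kappa>' U' where \<kappa>': "(\<kappa>', U') \<in> A" "F' y \<in> U'" using A by (rule atlas_cover)
  obtain \<psi> V where \<psi>: "(\<psi>, V) \<in> A" "F y + F' y \<in> V" using A by (rule atlas_cover)
  have U: "is_chart \<kappa> U" and U': "is_chart \<kappa>' U'" using A \<kappa> \<kappa>' atlas_chart by blast+
  have "isCont (\<lambda>z. (F z, F' z)) y"
    using holo_map_at_isCont[OF F] holo_map_at_isCont[OF F'] by (rule continuous_Pair)
  moreover have "isCont (\<lambda>p. fst p + snd p) (F y, F' y)"
    using lie_group_continuous_add[OF G] continuous_on_eq_continuous_at by blast
  ultimately have cont: "isCont (\<lambda>z. F z + F' z) y"
    using isCont_o2 by fastforce
  let ?M = "\<lambda>(z, w). \<psi> (inv_into U \<kappa> z + inv_into U' \<kappa>' w)"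
  have "holo_at pair_cscale cscale ?M (\<kappa> (F y), \<kappa>' (F' y))"
    using lie_group_holo2_add[OF G \<kappa>(1) \<kappa>'(1) \<psi>(1)] \<kappa> \<kappa>' \<psi>
    by (auto simp: holo2_on_iff_holo_at chart_inv_into_chart[OF U] chart_inv_into_chart[OF U'])
  from holo_at_compose[OF this holo_at_Pair[OF holo_map_at_chart[OF F \<kappa>] holo_map_at_chart[OF F' \<kappa>']]]
  have "holo_at sE cscale (\<lambda>z. ?M (\<kappa> (F z), \<kappa>' (F' z))) y" .
  moreover obtain T where "open T" "y \<in> T" "\<And>z. z \<in> T \<Longrightarrow> F z \<in> U"
    using isCont_eventually_in_open[OF holo_map_at_isCont[OF F] is_chartD(1)[OF U] \<kappa>(2)] by blast
  moreover obtain T' where "open T'" "y \<in> T'" "\<And>z. z \<in> T' \<Longrightarrow> F' z \<in> U'"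
    using isCont_eventually_in_open[OF holo_map_at_isCont[OF F'] is_chartD(1)[OF U'] \<kappa>'(2)] by blast
  ultimately have "holo_at sE cscale (\<lambda>z. \<psi> (F z + F' z)) y"
    by (elim holo_at_transform_within_open[of _ _ _ _ "T \<inter> T'"])
       (auto simp: chart_inv_into_chart[OF U] chart_inv_into_chart[OF U'])
  then show ?thesis
    by (rule holo_map_atI[OF A cont \<psi>])
qed

lemma holo_map_at_uminus:
  "complex_lie_group A \<Longrightarrow> holo_map_at sE A F y \<Longrightarrow> holo_map_at sE A (\<lambda>z. - F z) y"
  using holo_map_at_compose[OF lie_group_atlas lie_group_atlas lie_group_holo_map_uminus] .

lemma holo_map_at_diff:
  "complex_lie_group A \<Longrightarrow> holo_map_at sE A F y \<Longrightarrow> holo_map_at sE A F' y \<Longrightarrow>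
    holo_map_at sE A (\<lambda>z. F z - F' z) y"
  unfolding diff_conv_add_uminus by (rule holo_map_at_add[OF _ _ holo_map_at_uminus])

lemma holo_map_translations:
  assumes "complex_lie_group A"
  shows "holo_map A A (\<lambda>x. c + x + d)"
proof -
  have A: "complex_atlas A" using assms by (rule lie_group_atlas)
  show ?thesis
  proof (rule holo_mapI[OF A A])
    fix \<kappa> U z assume "(\<kappa>, U) \<in> A" "z \<in> \<kappa> ` U"
    then show "holo_map_at cscale A (\<lambda>w. c + inv_into U \<kappa> w + d) z"
      by (intro holo_map_at_add[OF assms] holo_map_at_const holo_map_at_inv_chart[OF A])
  qed
qed

text \<open>The chart expression of \<open>(p, q) \<mapsto> -p + q\<close> is constant on the diagonal.\<close>
lemma lie_group_chart_neg_add_has_derivative: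
  assumes G: "complex_lie_group B" and \<sigma>: "(\<sigma>, V) \<in> B" "0 \<in> V"
  obtains D where "((\<lambda>pq. \<sigma> (- inv_into V \<sigma> (fst pq) + inv_into V \<sigma> (snd pq))) has_derivative D)
      (at (\<sigma> 0, \<sigma> 0))"
    and "\<And>h. D (h, h) = 0"
proof -
  have B: "complex_atlas B" using G by (rule lie_group_atlas)
  have V: "is_chart \<sigma> V" using B \<sigma>(1) by (rule atlas_chart)
  define M where "M = (\<lambda>pq. \<sigma> (- inv_into V \<sigma> (fst pq) + inv_into V \<sigma> (snd pq)))"
  have e: "\<sigma> 0 \<in> \<sigma> ` V" using \<sigma>(2) by simp
  note \<sigma>' = holo_map_at_inv_chart[OF B \<sigma>(1) e]
  have "holo_map_at pair_cscale B (\<lambda>pq. inv_into V \<sigma> (fst pq)) (\<sigma> 0, \<sigma> 0)"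
    by (rule holo_map_at_compose_holo_at[OF _ holo_at_fst]) (simp add: \<sigma>')
  moreover have "holo_map_at pair_cscale B (\<lambda>pq. inv_into V \<sigma> (snd pq)) (\<sigma> 0, \<sigma> 0)"
    by (rule holo_map_at_compose_holo_at[OF _ holo_at_snd]) (simp add: \<sigma>')
  ultimately have "holo_map_at pair_cscale B
      (\<lambda>pq. - inv_into V \<sigma> (fst pq) + inv_into V \<sigma> (snd pq)) (\<sigma> 0, \<sigma> 0)"
    by (intro holo_map_at_add[OF G] holo_map_at_uminus[OF G])
  from holo_map_at_chart[OF this \<sigma>(1)] have "holo_at pair_cscale cscale M (\<sigma> 0, \<sigma> 0)"
    using \<sigma>(2) by (simp add: M_def)
  then obtain D where D: "(M has_derivative D) (at (\<sigma> 0, \<sigma> 0))"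
    by (elim holo_atE)
  have "((\<lambda>p. M (p, p)) has_derivative (\<lambda>h. D (h, h))) (at (\<sigma> 0))"
    using diff_chain_at[OF has_derivative_Pair[OF has_derivative_ident has_derivative_ident] D]
    by (simp add: o_def)
  moreover have "((\<lambda>p. M (p, p)) has_derivative (\<lambda>_. 0)) (at (\<sigma> 0))"
    by (rule has_derivative_transform_within_open[OF has_derivative_const is_chartD(2)[OF V] e])
       (simp add: M_def)
  ultimately have "(\<lambda>h. D (h, h)) = (\<lambda>_. 0)"
    by (rule has_derivative_unique)
  then have "D (h, h) = 0" for h
    by (rule fun_cong)
  with D show ?thesis
    unfolding M_def by (rule that)
qed

lemma lie_group_has_derivative_zero_neg_add:
  fixes a b :: "'e::real_normed_vector \<Rightarrow> 'h::{t2_space, group_add}"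
  assumes G: "complex_lie_group B" and \<sigma>: "(\<sigma>, V) \<in> B" "0 \<in> V"
    and a: "isCont a s0" "a s0 = 0" "((\<lambda>s. \<sigma> (a s)) has_derivative D) (at s0)"
    and b: "isCont b s0" "b s0 = 0" "((\<lambda>s. \<sigma> (b s)) has_derivative D) (at s0)"
  shows "((\<lambda>s. \<sigma> (- a s + b s)) has_derivative (\<lambda>_. 0)) (at s0)"
proof -
  have V: "is_chart \<sigma> V" using lie_group_atlas[OF G] \<sigma>(1) by (rule atlas_chart)
  define M where "M = (\<lambda>pq. \<sigma> (- inv_into V \<sigma> (fst pq) + inv_into V \<sigma> (snd pq)))"
  obtain DM where DM: "(M has_derivative DM) (at (\<sigma> 0, \<sigma> 0))" "\<And>h. DM (h, h) = 0"
    by (rule lie_group_chart_neg_add_has_derivative[OF G \<sigma>, folded M_def]) (rule that)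
  have "((\<lambda>s. M (\<sigma> (a s), \<sigma> (b s))) has_derivative (\<lambda>h. DM (D h, D h))) (at s0)"
    using diff_chain_at[OF has_derivative_Pair[OF a(3) b(3)]] DM(1) a(2) b(2)
    by (simp add: o_def)
  then have M_ab: "((\<lambda>s. M (\<sigma> (a s), \<sigma> (b s))) has_derivative (\<lambda>_. 0)) (at s0)"
    by (simp add: DM(2))
  have "a s0 \<in> V" "b s0 \<in> V" using a(2) b(2) \<sigma>(2) by simp_all
  obtain T where T: "open T" "s0 \<in> T" "\<And>s. s \<in> T \<Longrightarrow> a s \<in> V"
    using isCont_eventually_in_open[OF a(1) is_chartD(1)[OF V] \<open>a s0 \<in> V\<close>] by blast
  obtain T' where T': "open T'" "s0 \<in> T'" "\<And>s. s \<in> T' \<Longrightarrow> b s \<in> V"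
    using isCont_eventually_in_open[OF b(1) is_chartD(1)[OF V] \<open>b s0 \<in> V\<close>] by blast
  show ?thesis
  proof (rule has_derivative_transform_within_open[OF M_ab])
    show "open (T \<inter> T')" "s0 \<in> T \<inter> T'" using T T' by auto
    fix s assume "s \<in> T \<inter> T'"
    then have "a s \<in> V" "b s \<in> V" using T(3) T'(3) by auto
    then show "M (\<sigma> (a s), \<sigma> (b s)) = \<sigma> (- a s + b s)"
      by (simp add: M_def chart_inv_into_chart[OF V])
  qed
qed

lemma add_closed_nhds_zero_eq_UNIV:
  fixes S :: "'a::{t2_space, group_add} set"
  assumes "connected (UNIV :: 'a set)"
    and add_cont: "continuous_on UNIV (\<lambda>p::'a \<times> 'a. fst p + snd p)"
    and minus_cont: "continuous_on UNIV (uminus :: 'a \<Rightarrow> 'a)"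
    and N: "open N" "0 \<in> N" "N \<subseteq> S" and add_closed: "\<And>a b. a \<in> S \<Longrightarrow> b \<in> S \<Longrightarrow> a + b \<in> S"
  shows "S = UNIV"
proof -
  have "open S"
  proof (subst open_subopen, intro ballI exI conjI)
    fix s assume s: "s \<in> S"
    show "open ((\<lambda>y. - s + y) -` N)"
      using continuous_on_compose2[OF add_cont continuous_on_Pair[OF continuous_on_const continuous_on_id]]
        continuous_on_open_vimage[OF open_UNIV] N(1) by auto
    show "s \<in> (\<lambda>y. - s + y) -` N"
      using N(2) by simp
    show "(\<lambda>y. - s + y) -` N \<subseteq> S"
    proof
      fix y assume "y \<in> (\<lambda>y. - s + y) -` N"
      then have "s + (- s + y) \<in> S" using s N(3) add_closed by blast
      then show "y \<in> S" by (simp add: add.assoc[symmetric])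
    qed
  qed
  moreover have "open (- S)"
  proof (subst open_subopen, intro ballI exI conjI)
    fix y assume y: "y \<in> - S"
    show "open ((\<lambda>y'. - y' + y) -` N)"
      using continuous_on_compose2[OF add_cont continuous_on_Pair[OF minus_cont continuous_on_const]]
        continuous_on_open_vimage[OF open_UNIV] N(1) by auto
    show "y \<in> (\<lambda>y'. - y' + y) -` N"
      using N(2) by simp
    show "(\<lambda>y'. - y' + y) -` N \<subseteq> - S"
    proof
      fix y' assume "y' \<in> (\<lambda>y'. - y' + y) -` N"
      then have "y' \<in> S \<Longrightarrow> y' + (- y' + y) \<in> S" using N(3) add_closed by blast
      then show "y' \<in> - S" using y by (auto simp: add.assoc[symmetric])
    qed
  qed
  moreover have "0 \<in> S" using N by blast
  ultimately show ?thesis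
    using assms(1) unfolding connected_def by blast
qed

section \<open>Cauchy's formula with a holomorphic parameter\<close>

lemma holo_at_integral_parameter:
  fixes f :: "'a::euclidean_space \<Rightarrow> real \<Rightarrow> complex"
  assumes U: "open U" "convex U" "z0 \<in> U"
    and f: "\<And>z t. z \<in> U \<Longrightarrow> t \<in> {0..1} \<Longrightarrow> ((\<lambda>z. f z t) has_derivative f' z t) (at z)"
    and f'_lin: "\<And>z t c h. z \<in> U \<Longrightarrow> t \<in> {0..1} \<Longrightarrow> f' z t (s c h) = c * f' z t h"
    and f_cont: "continuous_on (U \<times> {0..1}) (\<lambda>(z, t). f z t)"
    and f'_cont: "\<And>b. b \<in> Basis \<Longrightarrow> continuous_on (U \<times> {0..1}) (\<lambda>(z, t). f' z t b)"
  shows "holo_at s (*) (\<lambda>z. integral {0..1} (f z)) z0"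
proof -
  have f_int: "f z integrable_on cbox 0 1" if "z \<in> U" for z
    using continuous_on_o_Pair[OF f_cont that] by (simp add: o_def integrable_continuous_interval)
  define F where "F z t = Blinfun (f' z t)" for z t
  have F: "blinfun_apply (F z t) = f' z t" if "z \<in> U" "t \<in> {0..1}" for z t
    unfolding F_def using f[OF that] by (simp add: has_derivative_bounded_linear bounded_linear_Blinfun_apply)
  have F_cont: "continuous_on (U \<times> cbox 0 1) (\<lambda>(z, t). F z t)"
  proof (rule continuous_on_blinfun_componentwise)
    fix b :: 'a assume "b \<in> Basis"
    from f'_cont[OF this] show "continuous_on (U \<times> cbox 0 1) (\<lambda>x. blinfun_apply (case x of (z, t) \<Rightarrow> F z t) b)"
      unfolding cbox_interval by (rule continuous_on_eq) (auto simp: F)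
  qed
  moreover have "((\<lambda>z. f z t) has_derivative blinfun_apply (F z t)) (at z within U)"
    if "z \<in> U" "t \<in> cbox 0 1" for z t
    using f that by (simp add: F has_derivative_at_withinI)
  ultimately have "((\<lambda>z. integral (cbox 0 1) (f z)) has_derivative integral (cbox 0 1) (F z0)) (at z0)"
    using leibniz_rule[of U 0 1 f F z0] f_int U at_within_open[OF U(3,1)] by simp
  moreover have "integral (cbox 0 1) (F z0) (s c h) = c * integral (cbox 0 1) (F z0) h" for c h
  proof -
    have F_integrable: "F z0 integrable_on cbox 0 1"
      using continuous_on_o_Pair[OF F_cont U(3)] by (simp add: o_def integrable_continuous_interval)
    have F_int: "integral (cbox 0 1) (F z0) v = integral (cbox 0 1) (\<lambda>t. f' z0 t v)" for v
      unfolding blinfun_apply_integral[OF F_integrable] by (rule integral_cong) (simp add: F U(3))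
    have "integral (cbox 0 1) (\<lambda>t. f' z0 t (s c h)) = integral (cbox 0 1) (\<lambda>t. c * f' z0 t h)"
      by (rule integral_cong) (simp add: f'_lin U(3))
    then show ?thesis
      by (simp only: F_int integral_mult_right)
  qed
  ultimately show ?thesis
    by (intro holo_atI[of _ "integral (cbox 0 1) (F z0)"]) simp_all
qed

text \<open>With this kernel, Cauchy's formula for the derivative at the centre of the circle of radius
  \<open>r\<close> reads \<open>g' 0 = \<integral>\<^sub>0\<^sup>1 g (circlepath 0 r t) * cauchy_deriv_kernel r t dt\<close>.\<close>
definition cauchy_deriv_kernel :: "real \<Rightarrow> real \<Rightarrow> complex" where
  "cauchy_deriv_kernel r t =
     vector_derivative (circlepath 0 r) (at t) / (circlepath 0 r t)\<^sup>2 / (2 * pi * \<i>)"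

lemma norm_circlepath_0: "norm (circlepath 0 r t) = \<bar>r\<bar>"
  by (simp add: circlepath norm_mult)

lemma continuous_on_cauchy_deriv_kernel:
  assumes "r \<noteq> 0"
  shows "continuous_on S (cauchy_deriv_kernel r)"
proof -
  have "circlepath 0 r t \<noteq> 0" for t
    using assms norm_circlepath_0[of r t] by auto
  then show ?thesis
    unfolding cauchy_deriv_kernel_def vector_derivative_circlepath
    by (auto simp: circlepath intro!: continuous_intros)
qed

lemma has_field_derivative_along_complex_line:
  assumes "holo_at pair_cscale (*) P (p + pair_cscale s w)"
  shows "((\<lambda>s. P (p + pair_cscale s w)) has_field_derivative
           frechet_derivative P (at (p + pair_cscale s w)) w) (at s)"
proof -
  let ?q = "p + pair_cscale s w"
  have "((\<lambda>s. p + pair_cscale s w) has_derivative (\<lambda>h. pair_cscale h w)) (at s)"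
    using has_derivative_add[OF has_derivative_const
        bounded_linear_imp_has_derivative[OF bounded_linear_pair_cscale_left]] by simp
  from diff_chain_at[OF this holo_at_frechet_derivative(1)[OF assms]]
  have "((\<lambda>s. P (p + pair_cscale s w)) has_derivative
          (\<lambda>h. frechet_derivative P (at ?q) (pair_cscale h w))) (at s)"
    by (simp add: o_def)
  moreover have "frechet_derivative P (at ?q) (pair_cscale h w) = frechet_derivative P (at ?q) w * h"
    for h
    using holo_at_frechet_derivative(2)[OF assms] by (simp add: mult.commute)
  ultimately have "((\<lambda>s. P (p + pair_cscale s w)) has_derivative
      (\<lambda>h. frechet_derivative P (at ?q) w * h)) (at s)"
    by (simp only:)
  then show ?thesis
    by (simp add: has_field_derivative_def)
qed

lemma frechet_derivative_eq_circle_integral: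
  assumes r: "r > 0"
    and P: "\<And>s. norm s \<le> r \<Longrightarrow> holo_at pair_cscale (*) P (p + pair_cscale s w)"
  shows "frechet_derivative P (at p) w =
           integral {0..1} (\<lambda>t. P (p + pair_cscale (circlepath 0 r t) w) * cauchy_deriv_kernel r t)"
proof -
  let ?g = "\<lambda>s. P (p + pair_cscale s w)"
  note g' = has_field_derivative_along_complex_line[OF P]
  have "continuous_on (cball 0 r) ?g"
    by (intro continuous_at_imp_continuous_on ballI DERIV_isCont[OF g']) simp
  moreover have "?g holomorphic_on ball 0 r"
    unfolding holomorphic_on_open[OF open_ball]
  proof (intro ballI exI)
    fix s :: complex assume "s \<in> ball 0 r"
    then show "(?g has_field_derivative frechet_derivative P (at (p + pair_cscale s w)) w) (at s)"
      by (intro g') simp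
  qed
  ultimately have "(?g has_field_derivative
      1 / (2 * of_real pi * \<i>) * contour_integral (circlepath 0 r) (\<lambda>u. ?g u / (u - 0)\<^sup>2)) (at 0)"
    using r by (intro Cauchy_derivative_integral_circlepath(2)) simp_all
  moreover have "(?g has_field_derivative frechet_derivative P (at p) w) (at 0)"
    using g'[of 0] r by simp
  ultimately have "frechet_derivative P (at p) w =
      1 / (2 * of_real pi * \<i>) * contour_integral (circlepath 0 r) (\<lambda>u. ?g u / (u - 0)\<^sup>2)"
    by (rule DERIV_unique[rotated])
  then show ?thesis
    by (simp add: contour_integral_integral cauchy_deriv_kernel_def del: divide_divide_eq_left)
qed

lemma continuous_on_circle_integrand:
  assumes P: "continuous_on S P" and r: "r > 0" and p: "continuous_on X p"
    and S: "\<And>x s. x \<in> X \<Longrightarrow> norm s \<le> r \<Longrightarrow> p x + pair_cscale s w \<in> S"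
  shows "continuous_on (X \<times> T)
           (\<lambda>(x, t). P (p x + pair_cscale (circlepath 0 r t) w) * cauchy_deriv_kernel r t)"
proof -
  have "continuous_on (X \<times> T) (\<lambda>x. p (fst x))"
    by (rule continuous_on_compose2[OF p continuous_on_fst[OF continuous_on_id]]) auto
  then have "continuous_on (X \<times> T) (\<lambda>x. p (fst x) + pair_cscale (circlepath 0 r (snd x)) w)"
    by (intro continuous_on_add continuous_on_compose2[OF linear_continuous_on[OF bounded_linear_pair_cscale_left]])
       (auto simp: circlepath intro!: continuous_intros)
  moreover have "(\<lambda>x. p (fst x) + pair_cscale (circlepath 0 r (snd x)) w) ` (X \<times> T) \<subseteq> S"
    using S r by (auto simp: norm_circlepath_0)
  ultimately have "continuous_on (X \<times> T) (\<lambda>x. P (p (fst x) + pair_cscale (circlepath 0 r (snd x)) w))"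
    by (rule continuous_on_compose2[OF P])
  moreover have "continuous_on (X \<times> T) (\<lambda>x. cauchy_deriv_kernel r (snd x))"
    using r by (intro continuous_on_compose2[OF continuous_on_cauchy_deriv_kernel] continuous_intros) auto
  ultimately show ?thesis
    unfolding case_prod_unfold by (rule continuous_on_mult)
qed

lemma add_pair_cscale_in_ball:
  assumes "p \<in> ball p0 (e / 2)" "norm s \<le> e / 2 / (norm w + 1)"
  shows "p + pair_cscale s w \<in> ball p0 e"
proof -
  have w: "norm w + 1 > 0"
    using norm_ge_zero[of w] by linarith
  have "norm (pair_cscale s w) = norm s * norm w"
    by (rule norm_pair_cscale)
  also have "\<dots> \<le> e / 2 / (norm w + 1) * (norm w + 1)"
    using assms(2) by (intro mult_mono) (auto intro: order_trans[OF norm_ge_zero])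
  also have "\<dots> = e / 2"
    using w by (simp add: field_simps)
  finally show ?thesis
    using assms(1) dist_triangle[of p0 "p + pair_cscale s w" p] by (simp add: dist_norm)
qed

lemma continuous_on_frechet_derivative_apply:
  assumes S: "open S" and P: "\<And>q. q \<in> S \<Longrightarrow> holo_at pair_cscale (*) P q"
  shows "continuous_on S (\<lambda>q. frechet_derivative P (at q) w)"
  unfolding continuous_on_eq_continuous_at[OF S]
proof
  fix p0 assume "p0 \<in> S"
  then obtain e where e: "e > 0" "ball p0 e \<subseteq> S" using S openE by blast
  define r where "r = e / 2 / (norm w + 1)"
  have r: "r > 0"
    unfolding r_def using e by (simp add: add_nonneg_pos)
  have inS: "p + pair_cscale s w \<in> S" if "p \<in> ball p0 (e / 2)" "norm s \<le> r" for p s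
    using add_pair_cscale_in_ball[OF that[unfolded r_def]] e(2) by blast
  have "continuous_on S P"
    using P by (auto intro!: continuous_at_imp_continuous_on holo_at_isCont)
  from continuous_on_circle_integrand[where X = "ball p0 (e / 2)" and T = "cbox 0 1", OF this r continuous_on_id inS]
  have "continuous_on (ball p0 (e / 2))
      (\<lambda>p. integral (cbox 0 1) (\<lambda>t. P (p + pair_cscale (circlepath 0 r t) w) * cauchy_deriv_kernel r t))"
    by (intro integral_continuous_on_param) auto
  then have "continuous_on (ball p0 (e / 2)) (\<lambda>p. frechet_derivative P (at p) w)"
  proof (rule continuous_on_eq)
    fix p assume "p \<in> ball p0 (e / 2)"
    from frechet_derivative_eq_circle_integral[OF r P[OF inS[OF this]]]
    show "integral (cbox 0 1) (\<lambda>t. P (p + pair_cscale (circlepath 0 r t) w) * cauchy_deriv_kernel r t) =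
        frechet_derivative P (at p) w"
      by simp
  qed
  then show "isCont (\<lambda>q. frechet_derivative P (at q) w) p0"
    using e(1) continuous_on_eq_continuous_at[OF open_ball] by force
qed

lemma holo_at_circle_integral_parameter:
  fixes P :: "(complex^'n) \<times> (complex^'m) \<Rightarrow> complex"
  assumes W: "open W" and P: "\<And>p. p \<in> W \<Longrightarrow> holo_at pair_cscale (*) P p"
    and U: "open U" "convex U" "z0 \<in> U" and r: "r > 0"
    and UW: "\<And>z s. z \<in> U \<Longrightarrow> norm s \<le> r \<Longrightarrow> (y0, z) + pair_cscale s w \<in> W"
  shows "holo_at cscale (*)
    (\<lambda>z. integral {0..1} (\<lambda>t. P ((y0, z) + pair_cscale (circlepath 0 r t) w) * cauchy_deriv_kernel r t)) z0"
proof (rule holo_at_integral_parameter[OF U])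
  let ?q = "\<lambda>z t. (y0, z) + pair_cscale (circlepath 0 r t) w"
  have qW: "?q z t \<in> W" if "z \<in> U" for z t
    using UW[OF that] r by (simp add: norm_circlepath_0)
  fix z t assume z: "z \<in> U"
  have "((\<lambda>z. ?q z t) has_derivative (\<lambda>h. (0, h))) (at z)"
    by (auto intro!: derivative_eq_intros)
  from diff_chain_at[OF this holo_at_frechet_derivative(1)[OF P[OF qW[OF z]]]]
  show "((\<lambda>z. P (?q z t) * cauchy_deriv_kernel r t) has_derivative
      (\<lambda>h. frechet_derivative P (at (?q z t)) (0, h) * cauchy_deriv_kernel r t)) (at z)"
    by (auto simp: o_def intro: has_derivative_mult_left)
  show "frechet_derivative P (at (?q z t)) (0, cscale c h) * cauchy_deriv_kernel r t =
      c * (frechet_derivative P (at (?q z t)) (0, h) * cauchy_deriv_kernel r t)" for c h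
    using holo_at_frechet_derivative(2)[OF P[OF qW[OF z]], where c = c and v = "(0, h)"] by simp
next
  have "continuous_on W P"
    using P by (auto intro!: continuous_at_imp_continuous_on holo_at_isCont)
  from continuous_on_circle_integrand[OF this r continuous_on_Pair[OF continuous_on_const continuous_on_id] UW]
  show "continuous_on (U \<times> {0..1})
      (\<lambda>(z, t). P ((y0, z) + pair_cscale (circlepath 0 r t) w) * cauchy_deriv_kernel r t)" .
  from continuous_on_circle_integrand[OF continuous_on_frechet_derivative_apply[OF W P] r
      continuous_on_Pair[OF continuous_on_const continuous_on_id] UW]
  show "continuous_on (U \<times> {0..1}) (\<lambda>(z, t).
      frechet_derivative P (at ((y0, z) + pair_cscale (circlepath 0 r t) w)) (0, b) * cauchy_deriv_kernel r t)"
    for b .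
qed

lemma holo_at_frechet_derivative_partial:
  fixes P :: "(complex^'n) \<times> (complex^'m) \<Rightarrow> complex"
  assumes W: "open W" and P: "\<And>p. p \<in> W \<Longrightarrow> holo_at pair_cscale (*) P p" and "(y0, z0) \<in> W"
  shows "holo_at cscale (*) (\<lambda>z. frechet_derivative P (at (y0, z)) (v, 0)) z0"
proof -
  obtain e where e: "e > 0" "ball (y0, z0) e \<subseteq> W" using W \<open>(y0, z0) \<in> W\<close> openE by blast
  define r where "r = e / 2 / (norm (v, 0::complex^'m) + 1)"
  have r: "r > 0" unfolding r_def using e by (simp add: add_nonneg_pos)
  have inW: "(y0, z) + pair_cscale s (v, 0::complex^'m) \<in> W" if "z \<in> ball z0 (e / 2)" "norm s \<le> r" for z s
    using add_pair_cscale_in_ball[of "(y0, z)" "(y0, z0)" e s "(v, 0)"] that e(2)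
    by (auto simp: r_def dist_Pair_Pair)
  have integral_holo: "holo_at cscale (*) (\<lambda>z. integral {0..1}
      (\<lambda>t. P ((y0, z) + pair_cscale (circlepath 0 r t) (v, 0)) * cauchy_deriv_kernel r t)) z0"
    using e(1) r inW by (intro holo_at_circle_integral_parameter[OF W P, where U = "ball z0 (e / 2)"]) auto
  show ?thesis
  proof (rule holo_at_transform_within_open[OF integral_holo open_ball])
    show "z0 \<in> ball z0 (e / 2)" using e(1) by simp
    fix z assume "z \<in> ball z0 (e / 2)"
    from frechet_derivative_eq_circle_integral[OF r P[OF inW[OF this]]]
    show "integral {0..1} (\<lambda>t. P ((y0, z) + pair_cscale (circlepath 0 r t) (v, 0)) * cauchy_deriv_kernel r t)
        = frechet_derivative P (at (y0, z)) (v, 0)"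
      by simp
  qed
qed

lemma frechet_derivative_partial_eq_deriv:
  assumes "holo_at pair_cscale (*) P (y, z)"
  shows "deriv (\<lambda>s. P (y + cscale s v, z)) 0 = frechet_derivative P (at (y, z)) (v, 0)"
  using has_field_derivative_along_complex_line[of P "(y, z)" 0 "(v, 0)"] assms
  by (simp add: DERIV_imp_deriv)

section \<open>Equivariant holomorphic maps\<close>

lemma group_conj_identity:
  fixes p q r s p' s' :: "'a::group_add"
  shows "- (p - q) + (r - s) = - (p' - q) + (- (p - p') + (r - s')) + ((p' - q) + (- (p' - q) + (s' - s)))"
  by (simp only: diff_conv_add_uminus minus_add minus_minus add.assoc add_minus_cancel minus_add_cancel)

locale equivariant_holo_map =
  fixes A :: "(('g::{t2_space, group_add} \<Rightarrow> complex^'n) \<times> 'g set) set"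
    and B :: "(('h::{t2_space, group_add} \<Rightarrow> complex^'m) \<times> 'h set) set"
    and \<Gamma> :: "'g set" and \<rho> :: "'g \<Rightarrow> 'h" and \<phi> :: "'g \<Rightarrow> 'h"
  assumes lie_A: "complex_lie_group A" and lie_B: "complex_lie_group B"
    and holo_\<phi>: "holo_map A B \<phi>"
    and equivariant: "\<And>g \<gamma>. \<gamma> \<in> \<Gamma> \<Longrightarrow> \<phi> (g + \<gamma>) = \<phi> g + \<rho> \<gamma>"
    and holo_fun_quotient_const: "\<And>f. holo_fun_quotient A \<Gamma> f \<Longrightarrow> \<exists>c. \<forall>g. f g = c"
begin

lemma atlas_A: "complex_atlas A" and atlas_B: "complex_atlas B"
  using lie_A lie_B by (simp_all add: lie_group_atlas)

lemma holo_map_at_translation_difference: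
  assumes "(\<kappa>, U) \<in> A" "(\<psi>, U') \<in> A" "y \<in> \<kappa> ` U" "p \<in> \<kappa> ` U \<times> \<psi> ` U'"
  shows "holo_map_at pair_cscale B
    (\<lambda>p. \<phi> (inv_into U \<kappa> (fst p) - inv_into U \<kappa> y + inv_into U' \<psi> (snd p)) - \<phi> (inv_into U' \<psi> (snd p))) p"
proof -
  have "holo_map_at pair_cscale A (\<lambda>p. inv_into U \<kappa> (fst p)) p"
    using assms by (intro holo_map_at_compose_holo_at[OF holo_map_at_inv_chart[OF atlas_A] holo_at_fst]) auto
  moreover have \<psi>: "holo_map_at pair_cscale A (\<lambda>p. inv_into U' \<psi> (snd p)) p"
    using assms by (intro holo_map_at_compose_holo_at[OF holo_map_at_inv_chart[OF atlas_A] holo_at_snd]) auto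
  ultimately have "holo_map_at pair_cscale A
      (\<lambda>p. inv_into U \<kappa> (fst p) - inv_into U \<kappa> y + inv_into U' \<psi> (snd p)) p"
    by (intro holo_map_at_add[OF lie_A] holo_map_at_diff[OF lie_A] holo_map_at_const)
  then show ?thesis
    by (intro holo_map_at_diff[OF lie_B] holo_map_at_compose[OF atlas_A atlas_B holo_\<phi>] \<psi>)
qed

text \<open>With \<open>c s = \<kappa>\<^sup>-\<^sup>1 (y + s w) - \<kappa>\<^sup>-\<^sup>1 y\<close>, the curve \<open>s \<mapsto> \<phi> (c s + g) - \<phi> g\<close> passes through
  \<open>0\<close> at \<open>s = 0\<close> for every \<open>g\<close>, so its derivative there, read in a chart \<open>\<sigma>\<close> at \<open>0\<close>, is a
  function on all of \<open>G\<close> although \<open>\<sigma>\<close> is only local.\<close>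
lemma holo_fun_deriv_translation_difference:
  assumes \<kappa>: "(\<kappa>, U) \<in> A" and \<sigma>: "(\<sigma>, V) \<in> B" "0 \<in> V" and y: "y \<in> \<kappa> ` U"
  shows "holo_fun A (\<lambda>g. deriv (\<lambda>s. \<sigma> (\<phi> (inv_into U \<kappa> (y + cscale s w) - inv_into U \<kappa> y + g) - \<phi> g) $ j) 0)"
proof (rule holo_funI[OF atlas_A])
  fix \<psi> U' z0 assume \<psi>: "(\<psi>, U') \<in> A" and z0: "z0 \<in> \<psi> ` U'"
  define Q where "Q p = \<phi> (inv_into U \<kappa> (fst p) - inv_into U \<kappa> y + inv_into U' \<psi> (snd p)) -
      \<phi> (inv_into U' \<psi> (snd p))" for p
  define W where "W = Q -` V \<inter> (\<kappa> ` U \<times> \<psi> ` U')"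
  have Q: "holo_map_at pair_cscale B Q p" if "p \<in> \<kappa> ` U \<times> \<psi> ` U'" for p
    unfolding Q_def using holo_map_at_translation_difference[OF \<kappa> \<psi> y that] .
  have "open W"
  proof -
    have "open (\<kappa> ` U \<times> \<psi> ` U')"
      using is_chartD(2)[OF atlas_chart[OF atlas_A \<kappa>]] is_chartD(2)[OF atlas_chart[OF atlas_A \<psi>]]
      by (rule open_Times)
    moreover have "continuous_on (\<kappa> ` U \<times> \<psi> ` U') Q"
      using holo_map_at_isCont[OF Q] by (intro continuous_at_imp_continuous_on) blast
    ultimately show ?thesis
      unfolding W_def using continuous_on_open_vimage is_chartD(1)[OF atlas_chart[OF atlas_B \<sigma>(1)]] by blast
  qed
  have P: "holo_at pair_cscale (*) (\<lambda>p. \<sigma> (Q p) $ j) p" if "p \<in> W" for p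
    using that holo_at_vec_nth[OF holo_map_at_chart[OF Q \<sigma>(1)]] by (auto simp: W_def)
  have "(y, z0) \<in> W"
    using y z0 \<sigma>(2) by (simp add: W_def Q_def)
  from holo_at_frechet_derivative_partial[OF \<open>open W\<close> P this]
  have "holo_at cscale (*) (\<lambda>z. frechet_derivative (\<lambda>p. \<sigma> (Q p) $ j) (at (y, z)) (w, 0)) z0" .
  moreover have "open (Pair y -` W)"
    using \<open>open W\<close> by (intro continuous_open_vimage) (auto intro: continuous_intros)
  moreover have "z0 \<in> Pair y -` W"
    using \<open>(y, z0) \<in> W\<close> by simp
  moreover have "frechet_derivative (\<lambda>p. \<sigma> (Q p) $ j) (at (y, z)) (w, 0) =
      deriv (\<lambda>s. \<sigma> (\<phi> (inv_into U \<kappa> (y + cscale s w) - inv_into U \<kappa> y + inv_into U' \<psi> z) -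
        \<phi> (inv_into U' \<psi> z)) $ j) 0" if "z \<in> Pair y -` W" for z
    using frechet_derivative_partial_eq_deriv[OF P, of y z w] that by (simp add: Q_def)
  ultimately show "holo_at cscale (*) (\<lambda>z. deriv (\<lambda>s. \<sigma> (\<phi> (inv_into U \<kappa> (y + cscale s w) -
      inv_into U \<kappa> y + inv_into U' \<psi> z) - \<phi> (inv_into U' \<psi> z)) $ j) 0) z0"
    by (rule holo_at_transform_within_open)
qed

lemma deriv_translation_difference_eq:
  assumes "(\<kappa>, U) \<in> A" "(\<sigma>, V) \<in> B" "0 \<in> V" "y \<in> \<kappa> ` U"
  shows "deriv (\<lambda>s. \<sigma> (\<phi> (inv_into U \<kappa> (y + cscale s w) - inv_into U \<kappa> y + g) - \<phi> g) $ j) 0 =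
    deriv (\<lambda>s. \<sigma> (\<phi> (inv_into U \<kappa> (y + cscale s w) - inv_into U \<kappa> y) - \<phi> 0) $ j) 0"
proof -
  define \<Theta> where "\<Theta> g = deriv (\<lambda>s. \<sigma> (\<phi> (inv_into U \<kappa> (y + cscale s w) - inv_into U \<kappa> y + g) - \<phi> g) $ j) 0"
    for g
  have "\<phi> (x + (g + \<gamma>)) - \<phi> (g + \<gamma>) = \<phi> (x + g) - \<phi> g" if "\<gamma> \<in> \<Gamma>" for x g \<gamma>
    using equivariant[OF that] by (simp add: add.assoc[symmetric] diff_add_eq_diff_diff_swap)
  then have "holo_fun_quotient A \<Gamma> \<Theta>"
    unfolding holo_fun_quotient_def \<Theta>_def
    using holo_fun_deriv_translation_difference[OF assms] by simp
  then obtain c where "\<And>g. \<Theta> g = c"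
    using holo_fun_quotient_const by blast
  then have "\<Theta> g = \<Theta> 0" by simp
  then show ?thesis by (simp add: \<Theta>_def)
qed

definition translation_defect :: "'g \<Rightarrow> 'g \<Rightarrow> 'h" where
  "translation_defect g x = - (\<phi> (x + g) - \<phi> g) + (\<phi> x - \<phi> 0)"

lemma holo_map_at_translation_difference_curve:
  assumes \<kappa>: "(\<kappa>, U) \<in> A" and y: "y \<in> \<kappa> ` U"
  shows "holo_map_at (*) B (\<lambda>s. \<phi> (inv_into U \<kappa> (y + cscale s w) - inv_into U \<kappa> y + g) - \<phi> g) 0"
proof -
  have "holo_map_at (*) A (\<lambda>s. inv_into U \<kappa> (y + cscale s w)) 0"
    using holo_map_at_inv_chart[OF atlas_A \<kappa> y]
    by (intro holo_map_at_compose_holo_at[OF _ holo_at_complex_line]) simp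
  then have "holo_map_at (*) A (\<lambda>s. inv_into U \<kappa> (y + cscale s w) - inv_into U \<kappa> y + g) 0"
    by (intro holo_map_at_add[OF lie_A] holo_map_at_diff[OF lie_A] holo_map_at_const)
  then show ?thesis
    by (intro holo_map_at_diff[OF lie_B] holo_map_at_compose[OF atlas_A atlas_B holo_\<phi>] holo_map_at_const)
qed

lemma translation_difference_curve_has_derivative:
  assumes \<kappa>: "(\<kappa>, U) \<in> A" and \<sigma>: "(\<sigma>, V) \<in> B" "0 \<in> V" and y: "y \<in> \<kappa> ` U"
  shows "((\<lambda>s. \<sigma> (\<phi> (inv_into U \<kappa> (y + cscale s w) - inv_into U \<kappa> y + g) - \<phi> g)) has_derivative
    (\<lambda>h. cscale h (\<chi> j. deriv (\<lambda>s. \<sigma> (\<phi> (inv_into U \<kappa> (y + cscale s w) - inv_into U \<kappa> y) - \<phi> 0) $ j) 0)))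
    (at 0)"
proof -
  have "holo_at (*) cscale (\<lambda>s. \<sigma> (\<phi> (inv_into U \<kappa> (y + cscale s w) - inv_into U \<kappa> y + g) - \<phi> g)) 0"
    using holo_map_at_chart[OF holo_map_at_translation_difference_curve[OF \<kappa> y] \<sigma>(1)] \<sigma>(2) by simp
  from holo_at_complex_curve_has_derivative[OF this] show ?thesis
    by (simp only: deriv_translation_difference_eq[OF \<kappa> \<sigma> y])
qed

text \<open>Along a complex line through \<open>y\<close>, the defect is a fixed translate of \<open>-a + b\<close> for two
  curves \<open>a\<close>, \<open>b\<close> through \<open>0\<close> with the same derivative.\<close>
lemma translation_defect_curve_has_derivative_zero:
  assumes \<kappa>: "(\<kappa>, U) \<in> A" and \<sigma>: "(\<sigma>, V) \<in> B" "0 \<in> V" and y: "y \<in> \<kappa> ` U"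
    and defect: "translation_defect g (inv_into U \<kappa> y) \<in> V"
  shows "((\<lambda>s. \<sigma> (translation_defect g (inv_into U \<kappa> (y + cscale s w)))) has_derivative (\<lambda>_. 0)) (at 0)"
proof -
  define x where "x = inv_into U \<kappa> y"
  define a where "a = (\<lambda>s. \<phi> (inv_into U \<kappa> (y + cscale s w) - x + (x + g)) - \<phi> (x + g))"
  define b where "b = (\<lambda>s. \<phi> (inv_into U \<kappa> (y + cscale s w) - x + x) - \<phi> x)"
  define D where "D = (\<lambda>h. cscale h (\<chi> j. deriv (\<lambda>s. \<sigma> (\<phi> (inv_into U \<kappa> (y + cscale s w) - x) - \<phi> 0) $ j) 0))"
  have a: "holo_map_at (*) B a 0" and b: "holo_map_at (*) B b 0"
    unfolding a_def b_def x_def by (rule holo_map_at_translation_difference_curve[OF \<kappa> y])+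
  have "((\<lambda>s. \<sigma> (a s)) has_derivative D) (at 0)" and "((\<lambda>s. \<sigma> (b s)) has_derivative D) (at 0)"
    unfolding a_def b_def D_def x_def by (rule translation_difference_curve_has_derivative[OF \<kappa> \<sigma> y])+
  moreover have a0: "a 0 = 0" and b0: "b 0 = 0"
    by (simp_all add: a_def b_def x_def)
  ultimately have ab: "((\<lambda>s. \<sigma> (- a s + b s)) has_derivative (\<lambda>_. 0)) (at 0)"
    using lie_group_has_derivative_zero_neg_add[OF lie_B \<sigma>] holo_map_at_isCont[OF a] holo_map_at_isCont[OF b]
    by blast
  have ab_cont: "isCont (\<lambda>s. - a s + b s) 0"
    using holo_map_at_isCont[OF holo_map_at_add[OF lie_B holo_map_at_uminus[OF lie_B a] b]] .
  define u where "u = \<phi> (x + g) - \<phi> g"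
  have "- a 0 + b 0 \<in> V" "- u + (- a 0 + b 0) + (u + translation_defect g x) \<in> V"
    using \<sigma>(2) defect by (simp_all add: a0 b0 x_def)
  from has_derivative_zero_compose_holo_map[OF atlas_B holo_map_translations[OF lie_B] \<sigma>(1) this(1) \<sigma>(1) this(2)
      ab_cont ab]
  have zero: "((\<lambda>s. \<sigma> (- u + (- a s + b s) + (u + translation_defect g x))) has_derivative (\<lambda>_. 0)) (at 0)" .
  have "translation_defect g (inv_into U \<kappa> (y + cscale s w)) =
      - u + (- a s + b s) + (u + translation_defect g x)" for s
  proof -
    have shift: "inv_into U \<kappa> (y + cscale s w) - x + (x + g) = inv_into U \<kappa> (y + cscale s w) + g"
      by (simp only: add.assoc[symmetric] diff_add_cancel)
    show ?thesis
      unfolding translation_defect_def u_def a_def b_def shift diff_add_cancel by (rule group_conj_identity)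
  qed
  then show ?thesis
    using zero by (simp only:)
qed

lemma holo_map_at_translation_defect:
  assumes \<kappa>: "(\<kappa>, U) \<in> A" and y: "y \<in> \<kappa> ` U"
  shows "holo_map_at cscale B (\<lambda>y. translation_defect g (inv_into U \<kappa> y)) y"
proof -
  note \<kappa>y = holo_map_at_inv_chart[OF atlas_A \<kappa> y]
  have "holo_map_at cscale B (\<lambda>y. \<phi> (inv_into U \<kappa> y + g)) y"
    by (rule holo_map_at_compose[OF atlas_A atlas_B holo_\<phi> holo_map_at_add[OF lie_A \<kappa>y holo_map_at_const]])
  moreover have "holo_map_at cscale B (\<lambda>y. \<phi> (inv_into U \<kappa> y)) y"
    by (rule holo_map_at_compose[OF atlas_A atlas_B holo_\<phi> \<kappa>y])
  ultimately show ?thesis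
    unfolding translation_defect_def
    by (intro holo_map_at_add[OF lie_B] holo_map_at_uminus[OF lie_B] holo_map_at_diff[OF lie_B] holo_map_at_const)
qed

lemma translation_defect_has_derivative_zero:
  assumes \<kappa>: "(\<kappa>, U) \<in> A" and \<sigma>: "(\<sigma>, V) \<in> B" "0 \<in> V" and y: "y \<in> \<kappa> ` U"
    and defect: "translation_defect g (inv_into U \<kappa> y) \<in> V"
  shows "((\<lambda>y. \<sigma> (translation_defect g (inv_into U \<kappa> y))) has_derivative (\<lambda>_. 0)) (at y)"
proof -
  obtain D where D: "((\<lambda>y. \<sigma> (translation_defect g (inv_into U \<kappa> y))) has_derivative D) (at y)"
    using holo_map_at_chart[OF holo_map_at_translation_defect[OF \<kappa> y] \<sigma>(1) defect] by (elim holo_atE)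
  have "D w = 0" for w
  proof -
    have "((\<lambda>s. y + cscale s w) has_derivative (\<lambda>h. cscale h w)) (at 0)"
      using has_derivative_add[OF has_derivative_const
          bounded_linear_imp_has_derivative[OF bounded_linear_cscale_left]] by simp
    from diff_chain_at[OF this] D
    have "((\<lambda>s. \<sigma> (translation_defect g (inv_into U \<kappa> (y + cscale s w)))) has_derivative
        (\<lambda>h. D (cscale h w))) (at 0)"
      by (simp add: o_def)
    from has_derivative_unique[OF this translation_defect_curve_has_derivative_zero[OF \<kappa> \<sigma> y defect]]
    show ?thesis
      by (metis cscale_one)
  qed
  then have "D = (\<lambda>_. 0)"
    by (rule ext)
  with D show ?thesis
    by simp
qed

lemma translation_difference_near_zero:
  obtains N where "open N" "0 \<in> N" "\<And>x g. x \<in> N \<Longrightarrow> \<phi> (x + g) - \<phi> g = \<phi> x - \<phi> 0"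
proof -
  obtain \<kappa> U where \<kappa>: "(\<kappa>, U) \<in> A" "0 \<in> U" using atlas_A by (rule atlas_cover)
  obtain \<sigma> V where \<sigma>: "(\<sigma>, V) \<in> B" "0 \<in> V" using atlas_B by (rule atlas_cover)
  have U: "is_chart \<kappa> U" and V: "is_chart \<sigma> V"
    using atlas_chart atlas_A atlas_B \<kappa>(1) \<sigma>(1) by blast+
  obtain \<epsilon> where \<epsilon>: "\<epsilon> > 0" "ball (\<kappa> 0) \<epsilon> \<subseteq> \<kappa> ` U"
    using is_chartD(2)[OF U] \<kappa>(2) by (auto elim: openE)
  have defect_zero: "translation_defect g (inv_into U \<kappa> y) = 0" if "y \<in> ball (\<kappa> 0) \<epsilon>" for g y
  proof (rule has_derivative_zero_in_chart_imp_constant[OF connected_ball open_ball _ V \<sigma>(2) _ _ _ that])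
    show "continuous_on (ball (\<kappa> 0) \<epsilon>) (\<lambda>y. translation_defect g (inv_into U \<kappa> y))"
      using holo_map_at_isCont[OF holo_map_at_translation_defect[OF \<kappa>(1)]] \<epsilon>(2)
      by (intro continuous_at_imp_continuous_on) blast
    show "((\<lambda>y. \<sigma> (translation_defect g (inv_into U \<kappa> y))) has_derivative (\<lambda>_. 0)) (at y)"
      if "y \<in> ball (\<kappa> 0) \<epsilon>" "translation_defect g (inv_into U \<kappa> y) \<in> V" for y
      using that \<epsilon>(2) by (intro translation_defect_has_derivative_zero[OF \<kappa>(1) \<sigma>]) auto
    show "\<kappa> 0 \<in> ball (\<kappa> 0) \<epsilon>" "translation_defect g (inv_into U \<kappa> (\<kappa> 0)) = 0"
      using \<epsilon>(1) \<kappa>(2) by (simp_all add: chart_inv_into_chart[OF U] translation_defect_def)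
  qed
  show ?thesis
  proof
    show "open (U \<inter> \<kappa> -` ball (\<kappa> 0) \<epsilon>)"
      using is_chartD(1,4)[OF U] continuous_open_preimage by blast
    show "0 \<in> U \<inter> \<kappa> -` ball (\<kappa> 0) \<epsilon>"
      using \<epsilon>(1) \<kappa>(2) by simp
    fix x g assume "x \<in> U \<inter> \<kappa> -` ball (\<kappa> 0) \<epsilon>"
    then have "translation_defect g x = 0"
      using defect_zero[of "\<kappa> x" g] by (simp add: chart_inv_into_chart[OF U])
    then show "\<phi> (x + g) - \<phi> g = \<phi> x - \<phi> 0"
      unfolding translation_defect_def by (metis add_minus_cancel add.right_neutral)
  qed
qed

lemma translation_difference_eq:
  assumes "connected (UNIV :: 'g set)"
  shows "\<phi> (x + g) = (\<phi> x - \<phi> 0) + \<phi> g"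
proof -
  define S where "S = {x. \<forall>g. \<phi> (x + g) = (\<phi> x - \<phi> 0) + \<phi> g}"
  obtain N where N: "open N" "0 \<in> N" "\<And>x g. x \<in> N \<Longrightarrow> \<phi> (x + g) - \<phi> g = \<phi> x - \<phi> 0"
    using translation_difference_near_zero by metis
  have "S = UNIV"
  proof (rule add_closed_nhds_zero_eq_UNIV[OF assms lie_group_continuous_add[OF lie_A] _ N(1,2)])
    show "continuous_on UNIV (uminus :: 'g \<Rightarrow> 'g)"
      using lie_group_holo_map_uminus[OF lie_A] by (simp add: holo_map_def)
    show "N \<subseteq> S"
      using N(3) by (auto simp: S_def diff_eq_eq)
    fix a b assume "a \<in> S" "b \<in> S"
    then have "\<phi> (a + b + g) = (\<phi> (a + b) - \<phi> 0) + \<phi> g" for g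
      by (simp add: S_def add.assoc) (simp only: diff_conv_add_uminus add.assoc)
    then show "a + b \<in> S"
      by (simp add: S_def)
  qed
  then show ?thesis
    by (auto simp: S_def)
qed

end

theorem proposition1:
  fixes A :: "(('g::{t2_space, group_add} \<Rightarrow> complex^'n) \<times> 'g set) set"
    and B :: "(('h::{t2_space, group_add} \<Rightarrow> complex^'m) \<times> 'h set) set"
    and \<Gamma> :: "'g set"
    and \<rho> :: "'g \<Rightarrow> 'h"
  assumes "complex_lie_group A"
    and "connected (UNIV :: 'g set)"
    and "complex_lie_group B"
    and "discrete_subgroup \<Gamma>"
    and "group_hom_on \<Gamma> \<rho>"
    and "\<forall>f. holo_fun_quotient A \<Gamma> f \<longrightarrow> (\<exists>c. \<forall>g. f g = c)"
  shows "induced_bundle_holo_trivial A B \<Gamma> \<rho> \<longleftrightarrow>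
         (\<exists>\<rho>'. holo_map A B \<rho>' \<and> (\<forall>x y. \<rho>' (x + y) = \<rho>' x + \<rho>' y) \<and>
               (\<forall>\<gamma>\<in>\<Gamma>. \<rho>' \<gamma> = \<rho> \<gamma>))"
proof
  assume "induced_bundle_holo_trivial A B \<Gamma> \<rho>"
  then obtain \<phi> where \<phi>: "holo_map A B \<phi>" "\<And>g \<gamma>. \<gamma> \<in> \<Gamma> \<Longrightarrow> \<phi> (g + \<gamma>) = \<phi> g + \<rho> \<gamma>"
    unfolding induced_bundle_holo_trivial_def by blast
  interpret equivariant_holo_map A B \<Gamma> \<rho> \<phi>
    using assms \<phi> by unfold_locales auto
  define \<rho>' where "\<rho>' = (\<lambda>x. - \<phi> 0 + \<phi> x)"
  have "holo_map A B \<rho>'"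
    using holo_map_compose[OF atlas_A atlas_B atlas_B \<phi>(1) holo_map_translations[OF lie_B, of "- \<phi> 0" 0]]
    by (simp add: \<rho>'_def)
  moreover have "\<rho>' (x + y) = \<rho>' x + \<rho>' y" for x y
    unfolding \<rho>'_def translation_difference_eq[OF assms(2), of x y]
    by (simp only: diff_conv_add_uminus add.assoc)
  moreover have "\<rho>' \<gamma> = \<rho> \<gamma>" if "\<gamma> \<in> \<Gamma>" for \<gamma>
    using \<phi>(2)[OF that, of 0] by (simp add: \<rho>'_def)
  ultimately show "\<exists>\<rho>'. holo_map A B \<rho>' \<and> (\<forall>x y. \<rho>' (x + y) = \<rho>' x + \<rho>' y) \<and> (\<forall>\<gamma>\<in>\<Gamma>. \<rho>' \<gamma> = \<rho> \<gamma>)"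
    by blast
next
  assume "\<exists>\<rho>'. holo_map A B \<rho>' \<and> (\<forall>x y. \<rho>' (x + y) = \<rho>' x + \<rho>' y) \<and> (\<forall>\<gamma>\<in>\<Gamma>. \<rho>' \<gamma> = \<rho> \<gamma>)"
  then obtain \<rho>' where "holo_map A B \<rho>'" "\<And>x y. \<rho>' (x + y) = \<rho>' x + \<rho>' y"
    and "\<And>\<gamma>. \<gamma> \<in> \<Gamma> \<Longrightarrow> \<rho>' \<gamma> = \<rho> \<gamma>"
    by blast
  then show "induced_bundle_holo_trivial A B \<Gamma> \<rho>"
    unfolding induced_bundle_holo_trivial_def by (intro exI[of _ \<rho>']) simp
qed

end
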